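(* Let $k, m, \nu, d$ be positive integers and let $t \in \mathbb{R}$. Suppose $\tilde{\bm{c}} = \tilde{\bm{c}}(\bm{\theta}) \in \mathbb{R}^k$, $\tilde{\bm{A}} = \tilde{\bm{A}}(\bm{\theta}) \in \mathbb{R}^{m\times k}$ and $\tilde{\bm{b}} = \tilde{\bm{b}}(\bm{\theta}) \in \mathbb{R}^m$ are such that every entry of each of them is a real polynomial of degree at most $d$ in $\nu$ real variables $\bm{\theta} \in \mathbb{R}^\nu$. Assume that for every $\bm{\theta} \in \mathbb{R}^\nu$ the linear program $\max\{\tilde{\bm{c}}^\top \bm{y} : \tilde{\bm{A}}\bm{y} \le \tilde{\bm{b}},\ \bm{y}\in\mathbb{R}^k\}$ is feasible and bounded. Then there exist at most $\binom{m+2k}{2k}(m+2k+2)$ real polynomials $p_1,\dots,p_L$ in $\bm{\theta}$, each of degree at most $(2k+1)d$, with the following property: for any $\bm{\theta}, \bm{\theta}' \in \mathbb{R}^\nu$ such that $\operatorname{sign}(p_j(\bm{\theta})) = \operatorname{sign}(p_j(\bm{\theta}'))$ for all $j = 1,\dots,L$ (where the sign takes values in $\{<0, =0, >0\}$), the statement $\max\{\tilde{\bm{c}}(\bm{\theta})^\top \bm{y} : \tilde{\bm{A}}(\bm{\theta})\bm{y} \le \tilde{\bm{b}}(\bm{\theta})\} \ge t$ holds if and only if $\max\{\tilde{\bm{c}}(\bm{\theta}')^\top \bm{y} : \tilde{\bm{A}}(\bm{\theta}')\bm{y} \le \tilde{\bm{b}}(\bm{\theta}')\} \ge t$ holds.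
   Context: Vector inequalities are entrywise. *)

theory Defs
  imports "HOL-Analysis.Analysis"
begin

text \<open>A real polynomial of total degree at most d in the variables theta (indexed by the
  finite type 'v, so nu = CARD('v)): a finite linear combination of monomials
  prod_i theta_i ^ alpha_i with sum_i alpha_i at most d.\<close>
definition poly_deg_le :: "nat \<Rightarrow> (real^'v \<Rightarrow> real) \<Rightarrow> bool" where
  "poly_deg_le d f \<longleftrightarrow>
     (\<exists>(S :: ('v \<Rightarrow> nat) set) (coef :: ('v \<Rightarrow> nat) \<Rightarrow> real).
        finite S \<and> (\<forall>\<alpha>\<in>S. sum \<alpha> UNIV \<le> d) \<and>
        (\<forall>\<theta>. f \<theta> = (\<Sum>\<alpha>\<in>S. coef \<alpha> * (\<Prod>i\<in>UNIV. (\<theta> $ i) ^ (\<alpha> i)))))"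

definition lp_feasible_set :: "real^'k^'m \<Rightarrow> real^'m \<Rightarrow> (real^'k) set" where
  "lp_feasible_set A b = {y. \<forall>i. (A *v y) $ i \<le> b $ i}"

definition lp_feasible_bounded :: "real^'k \<Rightarrow> real^'k^'m \<Rightarrow> real^'m \<Rightarrow> bool" where
  "lp_feasible_bounded c A b \<longleftrightarrow>
     lp_feasible_set A b \<noteq> {} \<and> bdd_above ((\<lambda>y. c \<bullet> y) ` lp_feasible_set A b)"

text \<open>Optimal value max { c^T y : A y <= b } (the supremum, attained when feasible and bounded).\<close>
definition lp_value :: "real^'k \<Rightarrow> real^'k^'m \<Rightarrow> real^'m \<Rightarrow> real" where
  "lp_value c A b = Sup ((\<lambda>y. c \<bullet> y) ` lp_feasible_set A b)"

end

theory Submission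
  imports Defs
begin

text \<open>Writing each free variable as the difference of two nonnegative ones makes the feasible
  region pointed, so the optimum of a feasible bounded LP is attained at a vertex: the solution
  \<open>x\<^sub>S\<close> of a nonsingular subsystem formed by a set \<open>S\<close> of \<open>2k\<close> of the \<open>m + 2k\<close> constraints.
  By Cramer's rule \<open>x\<^sub>S\<close> is a vector of determinants of degree \<open>2kd\<close> in \<open>\<theta>\<close> divided by the
  determinant \<open>D\<^sub>S\<close>, so "\<open>x\<^sub>S\<close> is feasible with objective value at least \<open>t\<close>" is a condition on
  the signs of \<open>D\<^sub>S\<close> and of the \<open>m + 2k + 1\<close> polynomials obtained by clearing \<open>D\<^sub>S\<close> from the
  constraint and objective slacks, all of degree at most \<open>(2k + 1)d\<close>. The optimal value is at
  least \<open>t\<close> iff this condition holds for one of the \<open>(m + 2k choose 2k)\<close> sets \<open>S\<close>.\<close>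

definition monomial :: "('v::finite \<Rightarrow> nat) \<Rightarrow> real^'v \<Rightarrow> real" where
  "monomial \<alpha> \<theta> = (\<Prod>i\<in>UNIV. (\<theta> $ i) ^ \<alpha> i)"

lemma poly_deg_le_iff:
  "poly_deg_le d f \<longleftrightarrow>
     (\<exists>(S :: ('v::finite \<Rightarrow> nat) set) coef. finite S \<and> (\<forall>\<alpha>\<in>S. sum \<alpha> UNIV \<le> d) \<and>
        f = (\<lambda>\<theta>. \<Sum>\<alpha>\<in>S. coef \<alpha> * monomial \<alpha> \<theta>))"
  unfolding poly_deg_le_def monomial_def by (auto simp: fun_eq_iff)

lemma monomial_add: "monomial (\<lambda>i. \<alpha> i + \<beta> i) \<theta> = monomial \<alpha> \<theta> * monomial \<beta> \<theta>"
  unfolding monomial_def by (simp add: prod.distrib power_add)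

lemma poly_deg_le_monomial_family:
  assumes "finite X" "\<And>x. x \<in> X \<Longrightarrow> sum (\<alpha> x) UNIV \<le> d"
  shows "poly_deg_le d (\<lambda>\<theta>::real^'v::finite. \<Sum>x\<in>X. a x * monomial (\<alpha> x) \<theta>)"
proof -
  have "(\<Sum>x\<in>X. a x * monomial (\<alpha> x) \<theta>) =
        (\<Sum>\<beta>\<in>\<alpha> ` X. (\<Sum>x\<in>{x\<in>X. \<alpha> x = \<beta>}. a x) * monomial \<beta> \<theta>)" for \<theta>
    by (subst sum.image_gen[OF assms(1)]) (auto intro!: sum.cong simp: sum_distrib_right)
  then show ?thesis
    unfolding poly_deg_le_iff using assms by (intro exI[of _ "\<alpha> ` X"] exI) auto
qed

lemma poly_deg_le_monomial:
  "sum \<alpha> UNIV \<le> d \<Longrightarrow> poly_deg_le d (\<lambda>\<theta>. a * monomial \<alpha> \<theta>)"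
  using poly_deg_le_monomial_family[of "{()}" "\<lambda>_. \<alpha>"] by simp

lemma poly_deg_le_const: "poly_deg_le d (\<lambda>\<theta>::real^'v::finite. a)"
  using poly_deg_le_monomial[of "\<lambda>_. 0" d a] by (simp add: monomial_def)

lemma poly_deg_le_add:
  assumes "poly_deg_le d f" "poly_deg_le d g"
  shows "poly_deg_le d (\<lambda>\<theta>. f \<theta> + g \<theta>)"
proof -
  obtain S1 c1 S2 c2
    where S: "finite S1" "\<forall>\<alpha>\<in>S1. sum \<alpha> UNIV \<le> d" "finite S2" "\<forall>\<alpha>\<in>S2. sum \<alpha> UNIV \<le> d"
      and f: "f = (\<lambda>\<theta>. \<Sum>\<alpha>\<in>S1. c1 \<alpha> * monomial \<alpha> \<theta>)"
      and g: "g = (\<lambda>\<theta>. \<Sum>\<alpha>\<in>S2. c2 \<alpha> * monomial \<alpha> \<theta>)"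
    using assms unfolding poly_deg_le_iff by blast
  have "poly_deg_le d (\<lambda>\<theta>. \<Sum>x\<in>S1 <+> S2. case_sum c1 c2 x * monomial (case_sum id id x) \<theta>)"
    using S by (intro poly_deg_le_monomial_family) auto
  then show ?thesis
    using S by (simp add: f g sum.Plus comp_def)
qed

lemma poly_deg_le_cmult:
  assumes "poly_deg_le d f"
  shows "poly_deg_le d (\<lambda>\<theta>. a * f \<theta>)"
proof -
  obtain S coef where "finite S" "\<forall>\<alpha>\<in>S. sum \<alpha> UNIV \<le> d"
    and f: "f = (\<lambda>\<theta>. \<Sum>\<alpha>\<in>S. coef \<alpha> * monomial \<alpha> \<theta>)"
    using assms unfolding poly_deg_le_iff by blast
  then show ?thesis
    unfolding poly_deg_le_iff
    by (intro exI[of _ S] exI[of _ "\<lambda>\<alpha>. a * coef \<alpha>"]) (simp add: sum_distrib_left mult.assoc)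
qed

lemma poly_deg_le_diff:
  assumes "poly_deg_le d f" "poly_deg_le d g"
  shows "poly_deg_le d (\<lambda>\<theta>. f \<theta> - g \<theta>)"
  using poly_deg_le_add[OF assms(1) poly_deg_le_cmult[OF assms(2), of "-1"]] by simp

lemma poly_deg_le_sum:
  assumes "finite F" "\<And>x. x \<in> F \<Longrightarrow> poly_deg_le d (f x)"
  shows "poly_deg_le d (\<lambda>\<theta>. \<Sum>x\<in>F. f x \<theta>)"
  using assms by (induction F rule: finite_induct) (simp_all add: poly_deg_le_const poly_deg_le_add)

lemma poly_deg_le_mono:
  assumes "poly_deg_le d f" "d \<le> d'"
  shows "poly_deg_le d' f"
  using assms unfolding poly_deg_le_def by force

lemma poly_deg_le_mult:
  assumes "poly_deg_le d1 f" "poly_deg_le d2 g"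
  shows "poly_deg_le (d1 + d2) (\<lambda>\<theta>. f \<theta> * g \<theta>)"
proof -
  obtain S1 c1 S2 c2
    where S: "finite S1" "\<forall>\<alpha>\<in>S1. sum \<alpha> UNIV \<le> d1" "finite S2" "\<forall>\<alpha>\<in>S2. sum \<alpha> UNIV \<le> d2"
      and f: "f = (\<lambda>\<theta>. \<Sum>\<alpha>\<in>S1. c1 \<alpha> * monomial \<alpha> \<theta>)"
      and g: "g = (\<lambda>\<theta>. \<Sum>\<alpha>\<in>S2. c2 \<alpha> * monomial \<alpha> \<theta>)"
    using assms unfolding poly_deg_le_iff by blast
  have "poly_deg_le (d1 + d2)
          (\<lambda>\<theta>. \<Sum>p\<in>S1 \<times> S2. (c1 (fst p) * c2 (snd p)) * monomial (\<lambda>i. fst p i + snd p i) \<theta>)"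
    using S by (intro poly_deg_le_monomial_family) (auto simp: sum.distrib intro: add_mono)
  then show ?thesis
    by (simp add: f g sum_product sum.cartesian_product monomial_add mult_ac case_prod_beta)
qed

lemma poly_deg_le_prod:
  assumes "finite F" "\<And>x. x \<in> F \<Longrightarrow> poly_deg_le d (f x)"
  shows "poly_deg_le (card F * d) (\<lambda>\<theta>. \<Prod>x\<in>F. f x \<theta>)"
  using assms
proof (induction F rule: finite_induct)
  case (insert x F)
  then have "poly_deg_le (d + card F * d) (\<lambda>\<theta>. f x \<theta> * (\<Prod>x\<in>F. f x \<theta>))"
    by (intro poly_deg_le_mult) auto
  then show ?case using insert by simp
qed (simp add: poly_deg_le_const)

lemma poly_deg_le_det:
  fixes M :: "real^'v::finite \<Rightarrow> real^'n^'n"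
  assumes "\<And>i j. poly_deg_le d (\<lambda>\<theta>. M \<theta> $ i $ j)"
  shows "poly_deg_le (CARD('n) * d) (\<lambda>\<theta>. det (M \<theta>))"
proof -
  have "poly_deg_le (card (UNIV :: 'n set) * d) (\<lambda>\<theta>. \<Prod>i\<in>UNIV. M \<theta> $ i $ p i)" for p
    by (intro poly_deg_le_prod assms) simp
  then show ?thesis
    unfolding det_def by (intro poly_deg_le_sum poly_deg_le_cmult) simp_all
qed

definition ineq_region :: "('i \<Rightarrow> 'a::real_inner) \<Rightarrow> ('i \<Rightarrow> real) \<Rightarrow> 'a set" where
  "ineq_region G h = {z. \<forall>i. G i \<bullet> z \<le> h i}"

definition is_vertex :: "('i \<Rightarrow> 'a::real_inner) \<Rightarrow> ('i \<Rightarrow> real) \<Rightarrow> 'a \<Rightarrow> bool" where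
  "is_vertex G h z \<longleftrightarrow> z \<in> ineq_region G h \<and>
     (\<forall>v. (\<forall>i. G i \<bullet> z = h i \<longrightarrow> G i \<bullet> v = 0) \<longrightarrow> v = 0)"

lemma recession_direction_objective_nonpos:
  assumes bdd: "bdd_above ((\<bullet>) e ` ineq_region G h)"
    and z0: "z0 \<in> ineq_region G h"
    and w: "\<And>i. G i \<bullet> w \<le> 0"
  shows "e \<bullet> w \<le> 0"
proof (rule ccontr)
  assume "\<not> e \<bullet> w \<le> 0"
  obtain B where B: "\<And>z. z \<in> ineq_region G h \<Longrightarrow> e \<bullet> z \<le> B"
    using bdd by (auto simp: bdd_above_def)
  define l where "l = (\<bar>B - e \<bullet> z0\<bar> + 1) / (e \<bullet> w)"
  have "l > 0" using \<open>\<not> e \<bullet> w \<le> 0\<close> by (simp add: l_def)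
  have "G i \<bullet> (z0 + l *\<^sub>R w) \<le> h i" for i
  proof -
    have "l * (G i \<bullet> w) \<le> 0" using \<open>l > 0\<close> w[of i] by (simp add: mult_nonneg_nonpos)
    moreover have "G i \<bullet> z0 \<le> h i" using z0 by (simp add: ineq_region_def)
    ultimately show ?thesis by (simp add: inner_add_right)
  qed
  then have "e \<bullet> (z0 + l *\<^sub>R w) \<le> B" by (intro B) (simp add: ineq_region_def)
  moreover have "e \<bullet> (z0 + l *\<^sub>R w) = e \<bullet> z0 + \<bar>B - e \<bullet> z0\<bar> + 1"
    using \<open>\<not> e \<bullet> w \<le> 0\<close> by (simp add: l_def inner_add_right)
  ultimately show False by linarith
qed

lemma exists_ascent_edge_direction:
  assumes pointed: "\<And>v. (\<forall>i. G i \<bullet> v = 0) \<Longrightarrow> v = 0"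
    and bdd: "bdd_above ((\<bullet>) e ` ineq_region G h)"
    and z0: "z0 \<in> ineq_region G h" and not_vertex: "\<not> is_vertex G h z0"
  obtains s where "e \<bullet> s \<ge> 0" "\<And>i. G i \<bullet> z0 = h i \<Longrightarrow> G i \<bullet> s = 0" "\<exists>i. G i \<bullet> s > 0"
proof -
  obtain v where "v \<noteq> 0" and v: "\<And>i. G i \<bullet> z0 = h i \<Longrightarrow> G i \<bullet> v = 0"
    using z0 not_vertex by (auto simp: is_vertex_def)
  then obtain i0 where "G i0 \<bullet> v \<noteq> 0" using pointed by blast
  text \<open>Of the directions \<open>v\<close> and \<open>-v\<close>, one does not decrease the objective; it must leave
    the region by boundedness unless the objective is constant along it.\<close>
  have "\<exists>s \<in> {v, -v}. e \<bullet> s \<ge> 0 \<and> (\<exists>i. G i \<bullet> s > 0)"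
  proof (cases "e \<bullet> v = 0")
    case True
    moreover have "G i0 \<bullet> v > 0 \<or> G i0 \<bullet> (-v) > 0" using \<open>G i0 \<bullet> v \<noteq> 0\<close> by auto
    ultimately show ?thesis by auto
  next
    case False
    then obtain s where "s \<in> {v, -v}" "e \<bullet> s > 0" by (cases "e \<bullet> v > 0") force+
    then show ?thesis
      using recession_direction_objective_nonpos[OF bdd z0, of s] by (force simp: not_le)
  qed
  then obtain s where "s \<in> {v, -v}" "e \<bullet> s \<ge> 0" "\<exists>i. G i \<bullet> s > 0" by blast
  moreover have "G i \<bullet> s = 0" if "G i \<bullet> z0 = h i" for i
    using \<open>s \<in> {v, -v}\<close> v[OF that] by auto
  ultimately show ?thesis using that by blast
qed

lemma ratio_test_step:
  fixes G :: "'i::finite \<Rightarrow> 'a::real_inner"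
  assumes z0: "z0 \<in> ineq_region G h"
    and s_active: "\<And>i. G i \<bullet> z0 = h i \<Longrightarrow> G i \<bullet> s = 0" and s_leaves: "\<exists>i. G i \<bullet> s > 0"
  obtains l where "l > 0" "z0 + l *\<^sub>R s \<in> ineq_region G h"
    "{i. G i \<bullet> (z0 + l *\<^sub>R s) < h i} \<subset> {i. G i \<bullet> z0 < h i}"
proof -
  define J where "J = {i. G i \<bullet> s > 0}"
  define ratio where "ratio i = (h i - G i \<bullet> z0) / (G i \<bullet> s)" for i
  define l where "l = Min (ratio ` J)"
  have G_step: "G i \<bullet> (z0 + l *\<^sub>R s) = G i \<bullet> z0 + l * (G i \<bullet> s)" for i
    by (simp add: inner_add_right)
  have slack: "G i \<bullet> z0 < h i" if "i \<in> J" for i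
    using that s_active[of i] z0 by (auto simp: J_def ineq_region_def less_le)
  have "l \<in> ratio ` J"
    using s_leaves unfolding l_def by (intro Min_in) (auto simp: J_def)
  then obtain i1 where i1: "i1 \<in> J" "ratio i1 = l" by auto
  have l_le: "l \<le> ratio i" if "i \<in> J" for i
    using that by (simp add: l_def)
  have "l > 0"
    using i1 slack[OF i1(1)] by (auto simp: ratio_def J_def)
  moreover have "z0 + l *\<^sub>R s \<in> ineq_region G h"
  proof -
    have "l * (G i \<bullet> s) \<le> h i - G i \<bullet> z0" for i
    proof (cases "i \<in> J")
      case True
      then show ?thesis
        using mult_right_mono[OF l_le[OF True], of "G i \<bullet> s"] by (simp add: J_def ratio_def)
    next
      case False
      then have "l * (G i \<bullet> s) \<le> 0" using \<open>l > 0\<close> by (simp add: J_def mult_nonneg_nonpos)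
      moreover have "G i \<bullet> z0 \<le> h i" using z0 by (simp add: ineq_region_def)
      ultimately show ?thesis by simp
    qed
    then show ?thesis by (simp add: ineq_region_def G_step add.commute le_diff_eq)
  qed
  moreover have "{i. G i \<bullet> (z0 + l *\<^sub>R s) < h i} \<subset> {i. G i \<bullet> z0 < h i}"
  proof
    show "{i. G i \<bullet> (z0 + l *\<^sub>R s) < h i} \<subseteq> {i. G i \<bullet> z0 < h i}"
      using z0 s_active by (force simp: G_step ineq_region_def order_le_less)
    have "G i1 \<bullet> (z0 + l *\<^sub>R s) = h i1"
      using i1 by (auto simp: G_step ratio_def J_def field_simps)
    then have "i1 \<notin> {i. G i \<bullet> (z0 + l *\<^sub>R s) < h i}" "i1 \<in> {i. G i \<bullet> z0 < h i}"
      using slack[OF i1(1)] by auto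
    then show "{i. G i \<bullet> (z0 + l *\<^sub>R s) < h i} \<noteq> {i. G i \<bullet> z0 < h i}" by blast
  qed
  ultimately show ?thesis using that by blast
qed

lemma exists_vertex_ge:
  fixes G :: "'i::finite \<Rightarrow> 'a::real_inner"
  assumes pointed: "\<And>v. (\<forall>i. G i \<bullet> v = 0) \<Longrightarrow> v = 0"
    and bdd: "bdd_above ((\<bullet>) e ` ineq_region G h)"
    and z0: "z0 \<in> ineq_region G h"
  obtains z where "is_vertex G h z" "e \<bullet> z0 \<le> e \<bullet> z"
  using z0
proof (induction "card {i. G i \<bullet> z0 < h i}" arbitrary: z0 rule: less_induct)
  case less
  show ?case
  proof (cases "is_vertex G h z0")
    case False
    obtain s where s: "e \<bullet> s \<ge> 0" "\<And>i. G i \<bullet> z0 = h i \<Longrightarrow> G i \<bullet> s = 0" "\<exists>i. G i \<bullet> s > 0"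
      using exists_ascent_edge_direction[OF pointed bdd less.prems(2) False] by blast
    obtain l where l: "l > 0" "z0 + l *\<^sub>R s \<in> ineq_region G h"
      "{i. G i \<bullet> (z0 + l *\<^sub>R s) < h i} \<subset> {i. G i \<bullet> z0 < h i}"
      using ratio_test_step[OF less.prems(2) s(2,3)] by blast
    have "e \<bullet> z0 \<le> e \<bullet> (z0 + l *\<^sub>R s)"
      using l(1) s(1) by (simp add: inner_add_right)
    moreover have "card {i. G i \<bullet> (z0 + l *\<^sub>R s) < h i} < card {i. G i \<bullet> z0 < h i}"
      using l(3) by (intro psubset_card_mono) simp_all
    ultimately show ?thesis
      using less.hyps[OF _ _ l(2)] less.prems(1) by (meson order_trans)
  qed (use less.prems in blast)
qed

lemma exists_nonsingular_row_selection:
  fixes G :: "'i \<Rightarrow> real^'n"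
  assumes "\<And>v. (\<forall>i\<in>T. G i \<bullet> v = 0) \<Longrightarrow> v = 0"
  obtains S where "S \<subseteq> T" "card S = CARD('n)"
    "\<And>\<sigma>. bij_betw \<sigma> UNIV S \<Longrightarrow> det (\<chi> r. G (\<sigma> r)) \<noteq> 0"
proof -
  have "span (G ` T) = UNIV"
  proof (rule ccontr)
    assume "span (G ` T) \<noteq> UNIV"
    then obtain a where "a \<noteq> 0" "\<forall>x\<in>span (G ` T). a \<bullet> x = 0"
      using span_not_UNIV_orthogonal by blast
    then have "\<forall>i\<in>T. G i \<bullet> a = 0" by (auto simp: inner_commute span_base)
    then show False using assms \<open>a \<noteq> 0\<close> by blast
  qed
  then have "dim (G ` T) = dim (UNIV :: (real^'n) set)" by (metis dim_span)
  then have dim: "dim (G ` T) = CARD('n)" by simp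
  obtain B where B: "B \<subseteq> G ` T" "independent B" "G ` T \<subseteq> span B" "card B = dim (G ` T)"
    by (rule basis_exists)
  obtain S where S: "S \<subseteq> T" "inj_on G S" "B = G ` S"
    using B(1) subset_image_inj[of B G T] by blast
  have "det (\<chi> r. G (\<sigma> r)) \<noteq> 0" if "bij_betw \<sigma> UNIV S" for \<sigma>
  proof -
    have "rows (\<chi> r. G (\<sigma> r)) = G ` \<sigma> ` UNIV"
      by (auto simp: rows_def row_def vec_eq_iff)
    also have "\<dots> = B" using that S(3) by (simp add: bij_betw_def)
    finally have "rows (\<chi> r. G (\<sigma> r)) = B" .
    then have "rank (\<chi> r. G (\<sigma> r)) = CARD('n)"
      using B(2,4) dim by (simp add: row_rank_def dim_eq_card_independent)
    then show ?thesis by (simp add: det_eq_0_rank)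
  qed
  moreover have "card S = CARD('n)" using S(2,3) B(4) dim by (simp add: card_image)
  ultimately show ?thesis using that S(1) by blast
qed

text \<open>An arbitrary enumeration of \<open>S\<close> by the coordinates; meaningful only when
  \<open>card S = CARD('n)\<close>.\<close>
definition basis_enum :: "'i set \<Rightarrow> 'n::finite \<Rightarrow> 'i" where
  "basis_enum S = (SOME \<sigma>. bij_betw \<sigma> UNIV S)"

definition basis_matrix :: "('i \<Rightarrow> real^'n) \<Rightarrow> 'i set \<Rightarrow> real^'n^'n" where
  "basis_matrix G S = (\<chi> r. G (basis_enum S r))"

definition basis_det :: "('i \<Rightarrow> real^'n) \<Rightarrow> 'i set \<Rightarrow> real" where
  "basis_det G S = det (basis_matrix G S)"

definition cramer_num :: "('i \<Rightarrow> real^'n) \<Rightarrow> ('i \<Rightarrow> real) \<Rightarrow> 'i set \<Rightarrow> 'n \<Rightarrow> real" where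
  "cramer_num G h S col =
     det (\<chi> r j. if j = col then h (basis_enum S r) else basis_matrix G S $ r $ j)"

definition basic_solution :: "('i \<Rightarrow> real^'n) \<Rightarrow> ('i \<Rightarrow> real) \<Rightarrow> 'i set \<Rightarrow> real^'n" where
  "basic_solution G h S = (\<chi> col. cramer_num G h S col / basis_det G S)"

text \<open>\<open>basis_det G S\<close> times \<open>G i \<bullet> basic_solution G h S - h i\<close> and
  \<open>e \<bullet> basic_solution G h S - t\<close>: cleared of the denominator, these are polynomial in the data.\<close>
definition row_excess_num :: "('i \<Rightarrow> real^'n) \<Rightarrow> ('i \<Rightarrow> real) \<Rightarrow> 'i set \<Rightarrow> 'i \<Rightarrow> real" where
  "row_excess_num G h S i = (\<Sum>col\<in>UNIV. G i $ col * cramer_num G h S col) - h i * basis_det G S"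

definition obj_excess_num :: "real^'n \<Rightarrow> real \<Rightarrow> ('i \<Rightarrow> real^'n) \<Rightarrow> ('i \<Rightarrow> real) \<Rightarrow> 'i set \<Rightarrow> real" where
  "obj_excess_num e t G h S = (\<Sum>col\<in>UNIV. e $ col * cramer_num G h S col) - t * basis_det G S"

definition basic_certificate ::
    "real^'n \<Rightarrow> real \<Rightarrow> ('i \<Rightarrow> real^'n) \<Rightarrow> ('i \<Rightarrow> real) \<Rightarrow> 'i set \<Rightarrow> bool" where
  "basic_certificate e t G h S \<longleftrightarrow> basis_det G S \<noteq> 0 \<and>
     basic_solution G h S \<in> ineq_region G h \<and> t \<le> e \<bullet> basic_solution G h S"

lemma basic_solution_eq:
  fixes G :: "'i \<Rightarrow> real^'n"
  assumes "basis_det G S \<noteq> 0" "\<And>r::'n. G (basis_enum S r) \<bullet> z = h (basis_enum S r)"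
  shows "z = basic_solution G h S"
proof -
  have "(basis_matrix G S *v z) $ r = h (basis_enum S r)" for r
    using assms(2)[of r] by (simp add: matrix_vector_mult_def basis_matrix_def inner_vec_def)
  then have "basis_matrix G S *v z = (\<chi> r. h (basis_enum S r))"
    by (simp add: vec_eq_iff)
  with assms(1) have "z = (\<chi> k. det (\<chi> r j. if j = k then (\<chi> r. h (basis_enum S r)) $ r
                                           else basis_matrix G S $ r $ j) / basis_det G S)"
    by (simp add: cramer basis_det_def)
  then show ?thesis
    unfolding basic_solution_def cramer_num_def vec_lambda_beta .
qed

lemma exists_basic_solution_ge:
  fixes G :: "'i::finite \<Rightarrow> real^'n"
  assumes pointed: "\<And>v. (\<forall>i. G i \<bullet> v = 0) \<Longrightarrow> v = 0"
    and bdd: "bdd_above ((\<bullet>) e ` ineq_region G h)"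
    and z0: "z0 \<in> ineq_region G h"
  obtains S where "card S = CARD('n)" "basis_det G S \<noteq> 0"
    "basic_solution G h S \<in> ineq_region G h" "e \<bullet> z0 \<le> e \<bullet> basic_solution G h S"
proof -
  obtain z where z: "is_vertex G h z" "e \<bullet> z0 \<le> e \<bullet> z"
    using exists_vertex_ge[OF pointed bdd z0] by blast
  obtain S where S: "S \<subseteq> {i. G i \<bullet> z = h i}" "card S = CARD('n)"
    "\<And>\<sigma>. bij_betw \<sigma> UNIV S \<Longrightarrow> det (\<chi> r. G (\<sigma> r)) \<noteq> 0"
    using exists_nonsingular_row_selection[of "{i. G i \<bullet> z = h i}" G] z(1)
    by (auto simp: is_vertex_def)
  have bij: "bij_betw (basis_enum S) (UNIV :: 'n set) S"
    unfolding basis_enum_def using S(2) finite_same_card_bij[of "UNIV :: 'n set" S]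
    by (intro someI_ex[where P = "\<lambda>\<sigma>. bij_betw \<sigma> UNIV S"]) simp
  have "basis_det G S \<noteq> 0"
    using S(3)[OF bij] by (simp add: basis_det_def basis_matrix_def)
  moreover have "G (basis_enum S r) \<bullet> z = h (basis_enum S r)" for r :: 'n
    using bij_betwE[OF bij] S(1) by blast
  ultimately have "z = basic_solution G h S" by (rule basic_solution_eq)
  with z have "basic_solution G h S \<in> ineq_region G h" "e \<bullet> z0 \<le> e \<bullet> basic_solution G h S"
    by (auto simp: is_vertex_def)
  with that S(2) \<open>basis_det G S \<noteq> 0\<close> show ?thesis by blast
qed

text \<open>Optimal values are attained at basic solutions, of which there are finitely many.\<close>
lemma Sup_ge_iff_basic_certificate:
  fixes G :: "'i::finite \<Rightarrow> real^'n"
  assumes pointed: "\<And>v. (\<forall>i. G i \<bullet> v = 0) \<Longrightarrow> v = 0"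
    and ne: "ineq_region G h \<noteq> {}"
    and bdd: "bdd_above ((\<bullet>) e ` ineq_region G h)"
  shows "t \<le> Sup ((\<bullet>) e ` ineq_region G h) \<longleftrightarrow>
           (\<exists>S. card S = CARD('n) \<and> basic_certificate e t G h S)"
proof
  define Bases where "Bases = {S. card S = CARD('n) \<and> basis_det G S \<noteq> 0 \<and>
                                   basic_solution G h S \<in> ineq_region G h}"
  define M where "M = Max ((\<lambda>S. e \<bullet> basic_solution G h S) ` Bases)"
  have dominated: "\<exists>S\<in>Bases. e \<bullet> z \<le> e \<bullet> basic_solution G h S" if "z \<in> ineq_region G h" for z
    using exists_basic_solution_ge[OF pointed bdd that] unfolding Bases_def by blast
  have "finite Bases" by simp
  moreover have "Bases \<noteq> {}" using ne dominated by blast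
  ultimately have "M \<in> (\<lambda>S. e \<bullet> basic_solution G h S) ` Bases"
    unfolding M_def by (intro Max_in) auto
  then obtain S where S: "S \<in> Bases" "M = e \<bullet> basic_solution G h S" by auto
  have "Sup ((\<bullet>) e ` ineq_region G h) \<le> M"
  proof (rule cSup_least)
    fix x assume "x \<in> (\<bullet>) e ` ineq_region G h"
    then obtain S' where "S' \<in> Bases" "x \<le> e \<bullet> basic_solution G h S'"
      using dominated by blast
    moreover have "e \<bullet> basic_solution G h S' \<le> M"
      unfolding M_def using \<open>finite Bases\<close> \<open>S' \<in> Bases\<close> by (intro Max_ge) auto
    ultimately show "x \<le> M" by linarith
  qed (use ne in blast)
  moreover assume "t \<le> Sup ((\<bullet>) e ` ineq_region G h)"
  ultimately show "\<exists>S. card S = CARD('n) \<and> basic_certificate e t G h S"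
    using S by (auto simp: Bases_def basic_certificate_def)
next
  assume "\<exists>S. card S = CARD('n) \<and> basic_certificate e t G h S"
  then obtain S where "basic_solution G h S \<in> ineq_region G h" "t \<le> e \<bullet> basic_solution G h S"
    by (auto simp: basic_certificate_def)
  moreover from this(1) have "e \<bullet> basic_solution G h S \<le> Sup ((\<bullet>) e ` ineq_region G h)"
    by (intro cSup_upper bdd) simp
  ultimately show "t \<le> Sup ((\<bullet>) e ` ineq_region G h)" by linarith
qed

lemma sgn_div_le_0_iff: "(D::real) \<noteq> 0 \<Longrightarrow> Q / D \<le> 0 \<longleftrightarrow> sgn Q * sgn D \<le> 0"
  by (cases "D > 0"; cases "Q > 0"; cases "Q = 0") (auto simp: divide_le_0_iff sgn_if)

lemma sgn_div_ge_0_iff: "(D::real) \<noteq> 0 \<Longrightarrow> 0 \<le> Q / D \<longleftrightarrow> 0 \<le> sgn Q * sgn D"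
  by (cases "D > 0"; cases "Q > 0"; cases "Q = 0") (auto simp: zero_le_divide_iff sgn_if)

lemma basic_certificate_iff_signs:
  "basic_certificate e t G h S \<longleftrightarrow> basis_det G S \<noteq> 0 \<and>
     (\<forall>i. sgn (row_excess_num G h S i) * sgn (basis_det G S) \<le> 0) \<and>
     0 \<le> sgn (obj_excess_num e t G h S) * sgn (basis_det G S)"
proof (cases "basis_det G S = 0")
  case False
  have inner_basic_solution: "v \<bullet> basic_solution G h S =
      (\<Sum>col\<in>UNIV. v $ col * cramer_num G h S col) / basis_det G S" for v
    by (simp add: inner_vec_def basic_solution_def sum_divide_distrib)
  have row: "G i \<bullet> basic_solution G h S - h i = row_excess_num G h S i / basis_det G S" for i
    unfolding inner_basic_solution row_excess_num_def using False
    by (simp only: diff_divide_distrib) simp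
  have obj: "e \<bullet> basic_solution G h S - t = obj_excess_num e t G h S / basis_det G S"
    unfolding inner_basic_solution obj_excess_num_def using False
    by (simp only: diff_divide_distrib) simp
  have "G i \<bullet> basic_solution G h S \<le> h i \<longleftrightarrow>
          sgn (row_excess_num G h S i) * sgn (basis_det G S) \<le> 0" for i
    using row[of i] sgn_div_le_0_iff[OF False] by (metis diff_le_0_iff_le)
  moreover have "t \<le> e \<bullet> basic_solution G h S \<longleftrightarrow>
          0 \<le> sgn (obj_excess_num e t G h S) * sgn (basis_det G S)"
    using obj sgn_div_ge_0_iff[OF False] by (metis diff_ge_0_iff_ge)
  ultimately show ?thesis
    using False by (simp add: basic_certificate_def ineq_region_def)
qed (simp add: basic_certificate_def)

text \<open>A free variable \<open>y\<close> is written as \<open>y j = z (j, True) - z (j, False)\<close> with \<open>z \<ge> 0\<close>, the sign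
  constraints on \<open>z\<close> being the rows indexed by \<open>Inr\<close>. This makes the feasible region pointed, so
  that optima are attained at vertices; it is why bases have \<open>2k\<close> rows.\<close>
definition std_row :: "real^'k^'m \<Rightarrow> 'm + 'k \<times> bool \<Rightarrow> real^('k \<times> bool)" where
  "std_row A i = (case i of
       Inl r \<Rightarrow> (\<chi> p. if snd p then A $ r $ fst p else - A $ r $ fst p)
     | Inr q \<Rightarrow> (\<chi> p. if p = q then -1 else 0))"

definition std_rhs :: "real^'m \<Rightarrow> 'm + 'k::finite \<times> bool \<Rightarrow> real" where
  "std_rhs b i = (case i of Inl r \<Rightarrow> b $ r | Inr q \<Rightarrow> 0)"

definition std_obj :: "real^'k \<Rightarrow> real^('k \<times> bool)" where
  "std_obj c = (\<chi> p. if snd p then c $ fst p else - c $ fst p)"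

definition pn_diff :: "real^('k \<times> bool) \<Rightarrow> real^'k" where
  "pn_diff z = (\<chi> j. z $ (j, True) - z $ (j, False))"

definition pn_split :: "real^'k \<Rightarrow> real^('k \<times> bool)" where
  "pn_split y = (\<chi> p. if snd p then max (y $ fst p) 0 else max (- y $ fst p) 0)"

lemma sum_prod_bool:
  "(\<Sum>p\<in>(UNIV :: ('k::finite \<times> bool) set). f p) = (\<Sum>j\<in>UNIV. f (j, True) + f (j, False))"
proof -
  have "(\<Sum>p\<in>(UNIV :: ('k \<times> bool) set). f p) = (\<Sum>j\<in>UNIV. \<Sum>s\<in>UNIV. f (j, s))"
    by (simp add: sum.cartesian_product UNIV_Times_UNIV[symmetric] del: UNIV_Times_UNIV)
  then show ?thesis by (simp add: UNIV_bool add.commute)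
qed

lemma inner_std_row_Inl: "std_row A (Inl r) \<bullet> z = (A *v pn_diff z) $ r"
  by (simp add: std_row_def inner_vec_def sum_prod_bool matrix_vector_mult_def pn_diff_def
      algebra_simps sum_subtractf)

lemma inner_std_row_Inr: "std_row A (Inr q) \<bullet> z = - z $ q"
proof -
  have "std_row A (Inr q) \<bullet> z = (\<Sum>p\<in>UNIV. if p = q then - z $ p else 0)"
    unfolding std_row_def inner_vec_def by (intro sum.cong) auto
  then show ?thesis by simp
qed

lemma inner_std_obj: "std_obj c \<bullet> z = c \<bullet> pn_diff z"
  by (simp add: std_obj_def inner_vec_def sum_prod_bool pn_diff_def algebra_simps sum_subtractf)

lemma pn_diff_pn_split: "pn_diff (pn_split y) = y"
  by (simp add: pn_diff_def pn_split_def vec_eq_iff max_def)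

lemma std_rows_pointed: "(\<forall>i. std_row A i \<bullet> v = 0) \<Longrightarrow> v = 0"
  by (metis inner_std_row_Inr neg_equal_0_iff_equal vec_eq_iff zero_index)

lemma pn_diff_feasible:
  "z \<in> ineq_region (std_row A) (std_rhs b) \<Longrightarrow> pn_diff z \<in> lp_feasible_set A b"
  by (auto simp: ineq_region_def lp_feasible_set_def inner_std_row_Inl std_rhs_def
      dest: spec[of _ "Inl _"])

lemma pn_split_feasible:
  assumes "y \<in> lp_feasible_set A b"
  shows "pn_split y \<in> ineq_region (std_row A) (std_rhs b)"
proof -
  have "std_row A i \<bullet> pn_split y \<le> std_rhs b i" for i
  proof (cases i)
    case Inl
    then show ?thesis
      using assms by (simp add: inner_std_row_Inl pn_diff_pn_split std_rhs_def lp_feasible_set_def)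
  next
    case Inr
    then show ?thesis by (simp add: inner_std_row_Inr std_rhs_def pn_split_def)
  qed
  then show ?thesis by (simp add: ineq_region_def)
qed

lemma lp_objective_values_std:
  "(\<lambda>y. c \<bullet> y) ` lp_feasible_set A b = (\<bullet>) (std_obj c) ` ineq_region (std_row A) (std_rhs b)"
proof (intro equalityI image_subsetI)
  fix y assume "y \<in> lp_feasible_set A b"
  then show "c \<bullet> y \<in> (\<bullet>) (std_obj c) ` ineq_region (std_row A) (std_rhs b)"
    using pn_split_feasible by (intro image_eqI[of _ _ "pn_split y"]) (auto simp: inner_std_obj pn_diff_pn_split)
next
  fix z assume "z \<in> ineq_region (std_row A) (std_rhs b)"
  then show "std_obj c \<bullet> z \<in> (\<lambda>y. c \<bullet> y) ` lp_feasible_set A b"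
    using pn_diff_feasible by (auto simp: inner_std_obj)
qed

lemma lp_value_ge_iff_basic_certificate:
  fixes c :: "real^'k" and A :: "real^'k^'m" and b :: "real^'m"
  assumes "lp_feasible_bounded c A b"
  shows "t \<le> lp_value c A b \<longleftrightarrow>
    (\<exists>S. card S = CARD('k \<times> bool) \<and> basic_certificate (std_obj c) t (std_row A) (std_rhs b) S)"
proof -
  have "ineq_region (std_row A) (std_rhs b) \<noteq> {}"
    and "bdd_above ((\<bullet>) (std_obj c) ` ineq_region (std_row A) (std_rhs b))"
    using assms lp_objective_values_std[of c A b] by (auto simp: lp_feasible_bounded_def)
  then show ?thesis
    unfolding lp_value_def lp_objective_values_std
    by (intro Sup_ge_iff_basic_certificate std_rows_pointed)
qed

definition certificate_polys ::
    "('p \<Rightarrow> real^'n) \<Rightarrow> real \<Rightarrow> ('p \<Rightarrow> 'i \<Rightarrow> real^'n) \<Rightarrow> ('p \<Rightarrow> 'i \<Rightarrow> real) \<Rightarrow> 'i set \<Rightarrow> ('p \<Rightarrow> real) set"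
  where
  "certificate_polys e t G h S =
     insert (\<lambda>\<theta>. basis_det (G \<theta>) S)
       (insert (\<lambda>\<theta>. obj_excess_num (e \<theta>) t (G \<theta>) (h \<theta>) S)
         (range (\<lambda>i \<theta>. row_excess_num (G \<theta>) (h \<theta>) S i)))"

lemma finite_certificate_polys: "finite (certificate_polys e t G h (S :: 'i::finite set))"
  by (simp add: certificate_polys_def)

lemma card_certificate_polys_le:
  "card (certificate_polys e t G h (S :: 'i::finite set)) \<le> CARD('i) + 2"
proof -
  have "card (range (\<lambda>i \<theta>. row_excess_num (G \<theta>) (h \<theta>) S i)) \<le> CARD('i)"
    by (rule card_image_le) simp
  then show ?thesis
    unfolding certificate_polys_def by (simp add: card_insert_if)
qed

lemma basic_certificate_sign_invariant:
  assumes "\<forall>p\<in>certificate_polys e t G h S. sgn (p \<theta>) = sgn (p \<theta>')"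
  shows "basic_certificate (e \<theta>) t (G \<theta>) (h \<theta>) S \<longleftrightarrow> basic_certificate (e \<theta>') t (G \<theta>') (h \<theta>') S"
proof -
  have det: "sgn (basis_det (G \<theta>) S) = sgn (basis_det (G \<theta>') S)"
    and "sgn (obj_excess_num (e \<theta>) t (G \<theta>) (h \<theta>) S) = sgn (obj_excess_num (e \<theta>') t (G \<theta>') (h \<theta>') S)"
    and "\<And>i. sgn (row_excess_num (G \<theta>) (h \<theta>) S i) = sgn (row_excess_num (G \<theta>') (h \<theta>') S i)"
    using assms by (auto simp: certificate_polys_def)
  moreover from det have "basis_det (G \<theta>) S \<noteq> 0 \<longleftrightarrow> basis_det (G \<theta>') S \<noteq> 0"
    by (metis sgn_eq_0_iff)
  ultimately show ?thesis unfolding basic_certificate_iff_signs by simp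
qed

lemma poly_deg_le_certificate_polys:
  fixes G :: "real^'v::finite \<Rightarrow> 'i \<Rightarrow> real^'n"
  assumes G: "\<And>i col. poly_deg_le d (\<lambda>\<theta>. G \<theta> i $ col)"
    and h: "\<And>i. poly_deg_le d (\<lambda>\<theta>. h \<theta> i)"
    and e: "\<And>col. poly_deg_le d (\<lambda>\<theta>. e \<theta> $ col)"
    and p: "p \<in> certificate_polys e t G h S"
  shows "poly_deg_le ((CARD('n) + 1) * d) p"
proof -
  have det: "poly_deg_le (CARD('n) * d) (\<lambda>\<theta>. basis_det (G \<theta>) S)"
    unfolding basis_det_def by (intro poly_deg_le_det) (simp add: basis_matrix_def G)
  have num: "poly_deg_le (CARD('n) * d) (\<lambda>\<theta>. cramer_num (G \<theta>) (h \<theta>) S col)" for col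
    unfolding cramer_num_def
  proof (intro poly_deg_le_det)
    fix r j
    show "poly_deg_le d (\<lambda>\<theta>. (\<chi> r j. if j = col then h \<theta> (basis_enum S r)
                                      else basis_matrix (G \<theta>) S $ r $ j) $ r $ j)"
      by (cases "j = col") (simp_all add: basis_matrix_def G h)
  qed
  have "poly_deg_le (d + CARD('n) * d) (\<lambda>\<theta>. t * basis_det (G \<theta>) S)"
    by (rule poly_deg_le_mono[OF poly_deg_le_cmult[OF det]]) simp
  then have "poly_deg_le (d + CARD('n) * d) p"
    using p unfolding certificate_polys_def row_excess_num_def obj_excess_num_def
    by (auto intro!: poly_deg_le_diff poly_deg_le_sum poly_deg_le_mult poly_deg_le_mono[OF det]
        num G h e)
  then show ?thesis by (simp add: algebra_simps)
qed

lemma poly_deg_le_std_row: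
  assumes "\<And>r j. poly_deg_le d (\<lambda>\<theta>. A \<theta> $ r $ j)"
  shows "poly_deg_le d (\<lambda>\<theta>. std_row (A \<theta>) i $ p)"
proof (cases i)
  case Inl
  then show ?thesis
    using assms poly_deg_le_cmult[OF assms, of "-1"] by (cases "snd p") (simp_all add: std_row_def)
qed (simp add: std_row_def poly_deg_le_const)

lemma poly_deg_le_std_rhs:
  assumes "\<And>r. poly_deg_le d (\<lambda>\<theta>. b \<theta> $ r)"
  shows "poly_deg_le d (\<lambda>\<theta>. std_rhs (b \<theta>) i)"
  using assms by (cases i) (simp_all add: std_rhs_def poly_deg_le_const)

lemma poly_deg_le_std_obj:
  assumes "\<And>j. poly_deg_le d (\<lambda>\<theta>. c \<theta> $ j)"
  shows "poly_deg_le d (\<lambda>\<theta>. std_obj (c \<theta>) $ p)"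
  using assms poly_deg_le_cmult[OF assms, of "-1"] by (cases "snd p") (simp_all add: std_obj_def)

lemma card_UN_card_subsets_le:
  assumes "\<And>S. card (F S) \<le> N"
  shows "card (\<Union>S\<in>{S :: 'i::finite set. card S = n}. F S) \<le> (CARD('i) choose n) * N"
proof -
  have "card (\<Union>S\<in>{S :: 'i set. card S = n}. F S) \<le> (\<Sum>S\<in>{S :: 'i set. card S = n}. card (F S))"
    by (rule card_UN_le) simp
  also have "\<dots> \<le> card {S :: 'i set. card S = n} * N"
    using sum_bounded_above[of _ "\<lambda>S. card (F S)" N] assms by simp
  also have "card {S :: 'i set. card S = n} = CARD('i) choose n"
    using n_subsets[of "UNIV :: 'i set" n] by simp
  finally show ?thesis .
qed

definition lp_certificate_polys :: "real \<Rightarrow> ('p \<Rightarrow> real^'k) \<Rightarrow> ('p \<Rightarrow> real^'k^'m) \<Rightarrow> ('p \<Rightarrow> real^'m) \<Rightarrow>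
    ('m + 'k \<times> bool) set \<Rightarrow> ('p \<Rightarrow> real) set" where
  "lp_certificate_polys t c A b =
     certificate_polys (\<lambda>\<theta>. std_obj (c \<theta>)) t (\<lambda>\<theta>. std_row (A \<theta>)) (\<lambda>\<theta>. std_rhs (b \<theta>))"

lemma poly_deg_le_lp_certificate_polys:
  fixes c :: "real^'v::finite \<Rightarrow> real^'k" and A :: "real^'v \<Rightarrow> real^'k^'m" and b :: "real^'v \<Rightarrow> real^'m"
  assumes "\<forall>j. poly_deg_le d (\<lambda>\<theta>. c \<theta> $ j)"
    and "\<forall>i j. poly_deg_le d (\<lambda>\<theta>. A \<theta> $ i $ j)"
    and "\<forall>i. poly_deg_le d (\<lambda>\<theta>. b \<theta> $ i)"
    and "p \<in> lp_certificate_polys t c A b S"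
  shows "poly_deg_le ((2 * CARD('k) + 1) * d) p"
proof -
  have row: "poly_deg_le d (\<lambda>\<theta>. std_row (A \<theta>) i $ col)" for i col
    using assms(2) by (intro poly_deg_le_std_row) simp
  have rhs: "poly_deg_le d (\<lambda>\<theta>. std_rhs (b \<theta>) i)" for i
    using assms(3) by (intro poly_deg_le_std_rhs) simp
  have obj: "poly_deg_le d (\<lambda>\<theta>. std_obj (c \<theta>) $ col)" for col
    using assms(1) by (intro poly_deg_le_std_obj) simp
  have "poly_deg_le ((CARD('k \<times> bool) + 1) * d) p"
    using assms(4) unfolding lp_certificate_polys_def
    by (rule poly_deg_le_certificate_polys[OF row rhs obj])
  then show ?thesis by (simp add: mult.commute)
qed

lemma lp_value_ge_sign_invariant:
  fixes c :: "'p \<Rightarrow> real^'k" and A :: "'p \<Rightarrow> real^'k^'m" and b :: "'p \<Rightarrow> real^'m"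
  assumes "lp_feasible_bounded (c \<theta>) (A \<theta>) (b \<theta>)" "lp_feasible_bounded (c \<theta>') (A \<theta>') (b \<theta>')"
    and signs: "\<And>S p. card S = CARD('k \<times> bool) \<Longrightarrow> p \<in> lp_certificate_polys t c A b S \<Longrightarrow>
                  sgn (p \<theta>) = sgn (p \<theta>')"
  shows "t \<le> lp_value (c \<theta>) (A \<theta>) (b \<theta>) \<longleftrightarrow> t \<le> lp_value (c \<theta>') (A \<theta>') (b \<theta>')"
proof -
  have "basic_certificate (std_obj (c \<theta>)) t (std_row (A \<theta>)) (std_rhs (b \<theta>)) S \<longleftrightarrow>
        basic_certificate (std_obj (c \<theta>')) t (std_row (A \<theta>')) (std_rhs (b \<theta>')) S"
    if "card S = CARD('k \<times> bool)" for S
    using basic_certificate_sign_invariant[of "\<lambda>\<theta>. std_obj (c \<theta>)" t "\<lambda>\<theta>. std_row (A \<theta>)"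
        "\<lambda>\<theta>. std_rhs (b \<theta>)" S \<theta> \<theta>'] signs[OF that]
    by (simp add: lp_certificate_polys_def)
  then show ?thesis
    unfolding lp_value_ge_iff_basic_certificate[OF assms(1)] lp_value_ge_iff_basic_certificate[OF assms(2)]
    by blast
qed

theorem lemma1:
  fixes c :: "real^'v \<Rightarrow> real^'k"
    and A :: "real^'v \<Rightarrow> real^'k^'m"
    and b :: "real^'v \<Rightarrow> real^'m"
    and d :: nat and t :: real
  assumes "d > 0"
    and "\<forall>j. poly_deg_le d (\<lambda>\<theta>. c \<theta> $ j)"
    and "\<forall>i j. poly_deg_le d (\<lambda>\<theta>. A \<theta> $ i $ j)"
    and "\<forall>i. poly_deg_le d (\<lambda>\<theta>. b \<theta> $ i)"
    and "\<forall>\<theta>. lp_feasible_bounded (c \<theta>) (A \<theta>) (b \<theta>)"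
  shows "\<exists>ps :: (real^'v \<Rightarrow> real) list.
           length ps \<le> ((CARD('m) + 2 * CARD('k)) choose (2 * CARD('k))) * (CARD('m) + 2 * CARD('k) + 2)
         \<and> (\<forall>p\<in>set ps. poly_deg_le ((2 * CARD('k) + 1) * d) p)
         \<and> (\<forall>\<theta> \<theta>'. (\<forall>p\<in>set ps. sgn (p \<theta>) = sgn (p \<theta>')) \<longrightarrow>
               (lp_value (c \<theta>) (A \<theta>) (b \<theta>) \<ge> t \<longleftrightarrow> lp_value (c \<theta>') (A \<theta>') (b \<theta>') \<ge> t))"
proof -
  define P where "P = (\<Union>S\<in>{S. card S = CARD('k \<times> bool)}. lp_certificate_polys t c A b S)"
  obtain ps where ps: "set ps = P" "distinct ps"
    using finite_distinct_list[of P]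
    by (auto simp: P_def lp_certificate_polys_def finite_certificate_polys)
  have "card P \<le> (CARD('m + 'k \<times> bool) choose CARD('k \<times> bool)) * (CARD('m + 'k \<times> bool) + 2)"
    unfolding P_def lp_certificate_polys_def
    by (rule card_UN_card_subsets_le[OF card_certificate_polys_le])
  moreover have "CARD('m + 'k \<times> bool) = CARD('m) + 2 * CARD('k)"
    by (simp add: card_Plus flip: UNIV_Plus_UNIV)
  ultimately have "length ps \<le> ((CARD('m) + 2 * CARD('k)) choose (2 * CARD('k))) * (CARD('m) + 2 * CARD('k) + 2)"
    using distinct_card[OF ps(2)] ps(1) by (simp add: mult.commute)
  moreover have "\<forall>p\<in>set ps. poly_deg_le ((2 * CARD('k) + 1) * d) p"
    using poly_deg_le_lp_certificate_polys[OF assms(2-4)] by (auto simp: ps P_def)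
  moreover have "\<forall>\<theta> \<theta>'. (\<forall>p\<in>set ps. sgn (p \<theta>) = sgn (p \<theta>')) \<longrightarrow>
      (t \<le> lp_value (c \<theta>) (A \<theta>) (b \<theta>) \<longleftrightarrow> t \<le> lp_value (c \<theta>') (A \<theta>') (b \<theta>'))"
    by (intro allI impI lp_value_ge_sign_invariant assms(5)[rule_format]) (auto simp: ps P_def)
  ultimately show ?thesis by blast
qed

end
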